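(* Let $S$ be a positive integer, $M>0$, and let $G=\bigcup_{i=1}^t\left[\theta_i-\frac{\zeta_i}{M},\theta_i+\frac{\zeta_i}{M}\right]\subset\mathbb{R}$ be a union of $t$ pairwise disjoint intervals, with $t\le S$, $\zeta_i\ge0$ and $\sum_{i=1}^t\zeta_i\le S\zeta$. If $\zeta\le\frac{1}{8S(2S-1)}$, then there exists $m\in[2,4]$ such that $$\left[\theta_i-\frac{\zeta_i}{M}-\frac{q}{Mm},\ \theta_i+\frac{\zeta_i}{M}-\frac{q}{Mm}\right]\cap\left[\theta_j-\frac{\zeta_j}{M},\ \theta_j+\frac{\zeta_j}{M}\right]=\varnothing$$ for all $1\le i,j\le t$ and all $q\in\mathbb{Z}\setminus\{0\}$. *)

theory Defs
  imports Complex_Main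
begin

end

theory Submission
  imports Defs "HOL-Analysis.Lebesgue_Measure"
begin

text \<open>
  Write \<open>a = 1/m \<in> [1/4, 1/2]\<close> and scale by \<open>M\<close>: the claim becomes
  \<open>\<bar>M (\<theta>\<^sub>i - \<theta>\<^sub>j) - q a\<bar> > \<zeta>\<^sub>i + \<zeta>\<^sub>j\<close> for all \<open>i, j\<close> and \<open>q \<noteq> 0\<close>. For \<open>i = j\<close> this holds because
  \<open>\<bar>q\<bar> a > 1/4 \<ge> 2 \<zeta>\<^sub>i\<close>. For \<open>i \<noteq> j\<close>, with \<open>c = M \<bar>\<theta>\<^sub>i - \<theta>\<^sub>j\<bar>\<close>, \<open>r = \<zeta>\<^sub>i + \<zeta>\<^sub>j\<close> and \<open>k = \<bar>q\<bar>\<close>,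
  the bad steps \<open>a\<close> form the interval \<open>[(c - r)/k, (c + r)/k]\<close> of length \<open>2r/k\<close>, and the \<open>k\<close>
  whose interval meets \<open>[1/4, 1/2]\<close> lie in a range \<open>[n, 2n]\<close>, on which \<open>\<Sum> 1/k \<le> 2\<close>; so each pair
  excludes a set of measure at most \<open>4r\<close>. Summed over the pairs \<open>j < i\<close> this is \<open>4 (t - 1) \<Sum> \<zeta>\<^sub>i < 1/4\<close>, hence
  some \<open>a \<in> (1/4, 1/2]\<close> is excluded by no pair.
\<close>

lemma exists_point_outside_short_intervals:
  fixes l u :: "'i \<Rightarrow> real" and a b :: real
  assumes "finite I" and "\<And>k. k \<in> I \<Longrightarrow> l k \<le> u k" and "(\<Sum>k\<in>I. u k - l k) < b - a"
  shows "\<exists>x. a < x \<and> x \<le> b \<and> (\<forall>k\<in>I. x \<notin> {l k..u k})"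
proof (rule ccontr)
  assume "\<not> ?thesis"
  then have cover: "{a<..b} \<subseteq> (\<Union>k\<in>I. {l k..u k})" by auto
  have "0 \<le> (\<Sum>k\<in>I. u k - l k)" using assms(2) by (intro sum_nonneg) auto
  then have "a \<le> b" using assms(3) by simp
  then have "b - a = measure lborel {a<..b}" by simp
  also have "\<dots> \<le> measure lborel (\<Union>k\<in>I. {l k..u k})"
    using \<open>finite I\<close> by (intro measure_mono_fmeasurable[OF cover] fmeasurable_compact compact_UN) auto
  also have "\<dots> \<le> (\<Sum>k\<in>I. measure lborel {l k..u k})"
    using \<open>finite I\<close> by (intro measure_UNION_le) auto
  also have "\<dots> = (\<Sum>k\<in>I. u k - l k)" using assms(2) by (intro sum.cong) auto
  finally show False using assms(3) by simp
qed

lemma sum_inverse_le_two: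
  assumes "1 \<le> n" and "K \<subseteq> {n..2*n}"
  shows "(\<Sum>k\<in>K. 1 / real k) \<le> 2"
proof -
  have "card K \<le> n + 1" using card_mono[OF _ assms(2)] by simp
  have "(\<Sum>k\<in>K. 1 / real k) \<le> (\<Sum>k\<in>K. 1 / real n)"
    using assms by (intro sum_mono divide_left_mono) auto
  also have "\<dots> = real (card K) / real n" by simp
  also have "\<dots> \<le> real (n + 1) / real n"
    using \<open>card K \<le> n + 1\<close> by (intro divide_right_mono) auto
  also have "\<dots> \<le> 2" using assms(1) by (simp add: field_simps)
  finally show ?thesis .
qed

text \<open>The indices \<open>k \<ge> 1\<close> for which some \<open>a \<in> [1/4, 1/2]\<close> puts \<open>k * a\<close> within distance \<open>r\<close> of \<open>c\<close>.\<close>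
definition window_indices :: "real \<Rightarrow> real \<Rightarrow> nat set" where
  "window_indices c r = {k. 1 \<le> k \<and> 2 * (c - r) \<le> real k \<and> real k \<le> 4 * (c + r)}"

lemma
  assumes "8 * r < 1"
  shows finite_window_indices: "finite (window_indices c r)"
    and sum_inverse_window_indices: "(\<Sum>k\<in>window_indices c r. 1 / real k) \<le> 2"
proof -
  let ?K = "window_indices c r"
  have "?K \<subseteq> {..nat \<lceil>4 * (c + r)\<rceil>}"
    unfolding window_indices_def by (auto simp: le_nat_iff) (metis ceiling_mono ceiling_of_nat)
  then show "finite ?K" by (rule finite_subset) simp
  show "(\<Sum>k\<in>?K. 1 / real k) \<le> 2"
  proof (cases "?K = {}")
    case False
    define n where "n = Min ?K"
    have "n \<in> ?K" and "\<forall>k\<in>?K. n \<le> k" using \<open>finite ?K\<close> False by (simp_all add: n_def)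
    moreover have "k \<le> 2 * n" if "k \<in> ?K" for k
      using assms \<open>n \<in> ?K\<close> that unfolding window_indices_def by auto
    ultimately show ?thesis
      by (intro sum_inverse_le_two[of n]) (auto simp: window_indices_def)
  qed simp
qed

lemma exists_step_outside_windows:
  fixes c \<rho> :: "'p \<Rightarrow> real"
  assumes "finite P" and \<rho>_nonneg: "\<And>p. p \<in> P \<Longrightarrow> 0 \<le> \<rho> p" and "16 * (\<Sum>p\<in>P. \<rho> p) < 1"
  shows "\<exists>a. 1/4 < a \<and> a \<le> 1/2 \<and> (\<forall>p\<in>P. \<forall>k\<in>window_indices (c p) (\<rho> p).
           a \<notin> {(c p - \<rho> p) / k .. (c p + \<rho> p) / k})"
proof -
  define W where "W p = window_indices (c p) (\<rho> p)" for p
  define I where "I = Sigma P W"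
  define l where "l = (\<lambda>(p, k). (c p - \<rho> p) / real k)"
  define u where "u = (\<lambda>(p, k). (c p + \<rho> p) / real k)"
  have small: "8 * \<rho> p < 1" if "p \<in> P" for p
    using member_le_sum[of p P \<rho>] assms that by fastforce
  then have finite_W: "finite (W p)" if "p \<in> P" for p
    using that finite_window_indices unfolding W_def by blast
  then have "finite I" unfolding I_def using \<open>finite P\<close> by blast
  have "l pk \<le> u pk" if "pk \<in> I" for pk
    using that \<rho>_nonneg unfolding I_def W_def l_def u_def window_indices_def
    by (auto intro!: divide_right_mono)
  moreover have "(\<Sum>pk\<in>I. u pk - l pk) < 1/2 - 1/4"
  proof -
    have "(\<Sum>pk\<in>I. u pk - l pk) = (\<Sum>p\<in>P. \<Sum>k\<in>W p. u (p, k) - l (p, k))"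
      unfolding I_def using \<open>finite P\<close> finite_W by (subst sum.Sigma) auto
    also have "\<dots> = (\<Sum>p\<in>P. 2 * \<rho> p * (\<Sum>k\<in>W p. 1 / real k))"
      unfolding l_def u_def by (simp add: sum_distrib_left diff_divide_distrib[symmetric])
    also have "\<dots> \<le> (\<Sum>p\<in>P. 2 * \<rho> p * 2)"
      using small \<rho>_nonneg unfolding W_def
      by (intro sum_mono mult_left_mono sum_inverse_window_indices) auto
    also have "\<dots> < 1/2 - 1/4" using assms(3) by (simp add: sum_distrib_left[symmetric])
    finally show ?thesis .
  qed
  ultimately obtain a where "1/4 < a" "a \<le> 1/2" "\<forall>pk\<in>I. a \<notin> {l pk..u pk}"
    using exists_point_outside_short_intervals[OF \<open>finite I\<close>] by blast
  then show ?thesis unfolding I_def W_def l_def u_def by auto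
qed

lemma sum_lower_pairs:
  fixes z :: "nat \<Rightarrow> real"
  shows "(\<Sum>(i, j)\<in>Sigma {1..t} (\<lambda>i. {1..<i}). z i + z j) = (real t - 1) * (\<Sum>i=1..t. z i)"
proof -
  have "(\<Sum>i=1..t. \<Sum>j=1..<i. z i + z j) = (real t - 1) * (\<Sum>i=1..t. z i)"
  proof (induction t)
    case (Suc t)
    then show ?case
      by (simp add: sum.distrib atLeastLessThanSuc_atLeastAtMost algebra_simps)
  qed simp
  then show ?thesis by (simp add: sum.Sigma)
qed

lemma near_multiple_in_window:
  assumes "1/4 < a" and "a \<le> 1/2" and "q \<noteq> 0" and "\<bar>d - of_int q * a\<bar> \<le> r"
  shows "nat \<bar>q\<bar> \<in> window_indices \<bar>d\<bar> r"
    and "a \<in> {(\<bar>d\<bar> - r) / nat \<bar>q\<bar> .. (\<bar>d\<bar> + r) / nat \<bar>q\<bar>}"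
proof -
  define k where "k = nat \<bar>q\<bar>"
  have k: "real k = \<bar>of_int q\<bar>" "1 \<le> k" using \<open>q \<noteq> 0\<close> unfolding k_def by linarith+
  then have "\<bar>of_int q * a\<bar> = real k * a" using assms(1) by (simp add: abs_mult)
  then have "\<bar>\<bar>d\<bar> - real k * a\<bar> \<le> r"
    using assms(4) abs_triangle_ineq3[of d "of_int q * a"] by linarith
  then have lo: "\<bar>d\<bar> - r \<le> real k * a" and hi: "real k * a \<le> \<bar>d\<bar> + r" by linarith+
  have "real k * a \<le> real k / 2" and "real k / 4 \<le> real k * a"
    using assms(1,2) k(2) by (simp_all add: field_simps)
  with lo hi have "2 * (\<bar>d\<bar> - r) \<le> real k" and "real k \<le> 4 * (\<bar>d\<bar> + r)" by argo+
  then show "nat \<bar>q\<bar> \<in> window_indices \<bar>d\<bar> r"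
    using k(2) unfolding window_indices_def k_def[symmetric] by simp
  show "a \<in> {(\<bar>d\<bar> - r) / nat \<bar>q\<bar> .. (\<bar>d\<bar> + r) / nat \<bar>q\<bar>}"
    using lo hi k(2) unfolding k_def[symmetric] by (simp add: field_simps)
qed

lemma obtain_step_separating_translates:
  fixes x r :: "nat \<Rightarrow> real"
  assumes r_nonneg: "\<And>i. i \<in> {1..t} \<Longrightarrow> 0 \<le> r i"
    and separated: "\<And>i j. i \<in> {1..t} \<Longrightarrow> j \<in> {1..t} \<Longrightarrow> i \<noteq> j \<Longrightarrow> r i + r j < \<bar>x i - x j\<bar>"
    and "8 * (\<Sum>i=1..t. r i) \<le> 1" and "16 * (real t - 1) * (\<Sum>i=1..t. r i) < 1"
  obtains a where "1/4 < a" and "a \<le> 1/2"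
    and "\<And>i j q. i \<in> {1..t} \<Longrightarrow> j \<in> {1..t} \<Longrightarrow> q \<noteq> 0 \<Longrightarrow> r i + r j < \<bar>x i - x j - of_int q * a\<bar>"
proof -
  define P where "P = Sigma {1..t} (\<lambda>i. {1..<i})"
  define c where "c = (\<lambda>(i, j). \<bar>x i - x j\<bar>)"
  define \<rho> where "\<rho> = (\<lambda>(i, j). r i + r j)"
  have "(\<Sum>p\<in>P. \<rho> p) = (real t - 1) * (\<Sum>i=1..t. r i)"
    unfolding P_def \<rho>_def by (rule sum_lower_pairs)
  then have "16 * (\<Sum>p\<in>P. \<rho> p) < 1" using assms(4) by (simp only: mult.assoc)
  moreover have "0 \<le> \<rho> p" if "p \<in> P" for p
    using that r_nonneg unfolding P_def \<rho>_def by auto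
  moreover have "finite P" unfolding P_def by simp
  ultimately obtain a where a: "1/4 < a" "a \<le> 1/2"
    and outside: "\<forall>p\<in>P. \<forall>k\<in>window_indices (c p) (\<rho> p). a \<notin> {(c p - \<rho> p) / k .. (c p + \<rho> p) / k}"
    using exists_step_outside_windows by metis
  have "r i + r j < \<bar>x i - x j - of_int q * a\<bar>"
    if i: "i \<in> {1..t}" and j: "j \<in> {1..t}" and "q \<noteq> 0" for i j q
  proof (cases "i = j")
    case True
    have "2 * r i \<le> 1/4"
      using member_le_sum[of i "{1..t}" r] r_nonneg i assms(3) by fastforce
    also have "1/4 < a" using a by simp
    also have "a \<le> \<bar>of_int q\<bar> * a"
      using a \<open>q \<noteq> 0\<close> by (simp add: mult_le_cancel_right1 del: of_int_abs)
    finally show ?thesis using True a by (simp add: abs_mult)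
  next
    case False
    show ?thesis
    proof (rule ccontr)
      assume "\<not> ?thesis"
      then have near: "\<bar>(x i - x j) - of_int q * a\<bar> \<le> r i + r j" by simp
      define p where "p = (max i j, min i j)"
      have "p \<in> P" and "c p = \<bar>x i - x j\<bar>" and "\<rho> p = r i + r j"
        using i j False unfolding p_def P_def c_def \<rho>_def
        by (auto simp: max_def min_def abs_minus_commute)
      then show False
        using outside near_multiple_in_window[OF a \<open>q \<noteq> 0\<close> near] by metis
    qed
  qed
  with a that show ?thesis by blast
qed

lemma disjoint_Icc_centered_iff:
  fixes x y \<rho> \<sigma> :: real
  assumes "0 \<le> \<rho>" and "0 \<le> \<sigma>"
  shows "{x - \<rho>..x + \<rho>} \<inter> {y - \<sigma>..y + \<sigma>} = {} \<longleftrightarrow> \<rho> + \<sigma> < \<bar>x - y\<bar>"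
  using assms by (auto simp: Int_atLeastAtMost abs_if max_def min_def)

lemma disjoint_shifted_Icc_iff:
  fixes M \<rho> \<sigma> x y s :: real
  assumes "0 < M" and "0 \<le> \<rho>" and "0 \<le> \<sigma>"
  shows "{x - \<rho> / M - s .. x + \<rho> / M - s} \<inter> {y - \<sigma> / M .. y + \<sigma> / M} = {}
    \<longleftrightarrow> \<rho> + \<sigma> < \<bar>M * x - M * y - M * s\<bar>"
proof -
  have shift: "x - \<rho> / M - s = (x - s) - \<rho> / M" "x + \<rho> / M - s = (x - s) + \<rho> / M" by simp_all
  have "M * x - M * y - M * s = M * (x - s - y)" by (simp add: algebra_simps)
  then have scale: "\<bar>M * x - M * y - M * s\<bar> = M * \<bar>x - s - y\<bar>"
    using assms(1) by (simp add: abs_mult)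
  have "{x - \<rho> / M - s .. x + \<rho> / M - s} \<inter> {y - \<sigma> / M .. y + \<sigma> / M} = {}
      \<longleftrightarrow> \<rho> / M + \<sigma> / M < \<bar>x - s - y\<bar>"
    unfolding shift using assms by (intro disjoint_Icc_centered_iff) simp_all
  also have "\<dots> \<longleftrightarrow> \<rho> + \<sigma> < \<bar>M * x - M * y - M * s\<bar>"
    unfolding scale using assms(1) by (simp add: field_simps)
  finally show ?thesis .
qed

lemma radius_budget_bounds:
  fixes S t :: nat and Z \<zeta> :: real
  assumes "S > 0" and "t \<le> S" and "0 \<le> Z" and "Z \<le> real S * \<zeta>"
    and "\<zeta> \<le> 1 / (8 * real S * (2 * real S - 1))"
  shows "8 * Z \<le> 1" and "16 * (real t - 1) * Z < 1"
proof -
  have "Z \<le> real S * \<zeta>" by (fact assms(4))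
  also have "\<dots> \<le> real S * (1 / (8 * real S * (2 * real S - 1)))"
    using assms(5) by (rule mult_left_mono) simp
  also have "\<dots> = 1 / (8 * (2 * real S - 1))" using assms(1) by simp
  finally have Z: "8 * (2 * real S - 1) * Z \<le> 1"
    using assms(1) by (simp add: pos_le_divide_eq mult.commute)
  have "8 * Z \<le> 8 * (2 * real S - 1) * Z"
    using assms(1,3) by (intro mult_right_mono) auto
  with Z show "8 * Z \<le> 1" by linarith
  have "16 * (real t - 1) * Z \<le> 16 * (real S - 1) * Z"
    using assms(2,3) by (intro mult_right_mono) auto
  also have "\<dots> = 8 * (2 * real S - 1) * Z - 8 * Z" by (simp add: algebra_simps)
  also have "\<dots> < 1" using Z assms(3) by (cases "Z = 0") auto
  finally show "16 * (real t - 1) * Z < 1" .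
qed

theorem lemma2:
  fixes S t :: nat and M \<zeta> :: real and \<theta> \<zeta>s :: "nat \<Rightarrow> real"
  assumes "S > 0" and "M > 0" and "t \<le> S"
    and "\<And>i. i \<in> {1..t} \<Longrightarrow> \<zeta>s i \<ge> 0"
    and "\<And>i j. i \<in> {1..t} \<Longrightarrow> j \<in> {1..t} \<Longrightarrow> i \<noteq> j \<Longrightarrow>
           {\<theta> i - \<zeta>s i / M .. \<theta> i + \<zeta>s i / M} \<inter> {\<theta> j - \<zeta>s j / M .. \<theta> j + \<zeta>s j / M} = {}"
    and "(\<Sum>i=1..t. \<zeta>s i) \<le> real S * \<zeta>"
    and "\<zeta> \<le> 1 / (8 * real S * (2 * real S - 1))"
  shows "\<exists>m::real. 2 \<le> m \<and> m \<le> 4 \<and>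
    (\<forall>i\<in>{1..t}. \<forall>j\<in>{1..t}. \<forall>q::int. q \<noteq> 0 \<longrightarrow>
       {\<theta> i - \<zeta>s i / M - real_of_int q / (M * m) .. \<theta> i + \<zeta>s i / M - real_of_int q / (M * m)}
       \<inter> {\<theta> j - \<zeta>s j / M .. \<theta> j + \<zeta>s j / M} = {})"
proof -
  have "0 \<le> (\<Sum>i=1..t. \<zeta>s i)" using assms(4) by (intro sum_nonneg) auto
  note budget = radius_budget_bounds[OF assms(1,3) this assms(6,7)]
  have separated: "\<zeta>s i + \<zeta>s j < \<bar>M * \<theta> i - M * \<theta> j\<bar>"
    if "i \<in> {1..t}" "j \<in> {1..t}" "i \<noteq> j" for i j
    using assms(5)[OF that] disjoint_shifted_Icc_iff[OF assms(2) assms(4)[OF that(1)] assms(4)[OF that(2)],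
        of "\<theta> i" 0 "\<theta> j"]
    by simp
  obtain a where a: "1/4 < a" "a \<le> 1/2" and avoid: "\<And>i j q. i \<in> {1..t} \<Longrightarrow> j \<in> {1..t} \<Longrightarrow> q \<noteq> 0 \<Longrightarrow>
      \<zeta>s i + \<zeta>s j < \<bar>M * \<theta> i - M * \<theta> j - of_int q * a\<bar>"
    using obtain_step_separating_translates[of t \<zeta>s "\<lambda>i. M * \<theta> i"] assms(4) separated budget by blast
  show ?thesis
  proof (intro exI[of _ "1 / a"] conjI ballI allI impI)
    show "2 \<le> 1 / a" and "1 / a \<le> 4" using a by (simp_all add: field_simps)
    fix i j and q :: int assume ij: "i \<in> {1..t}" "j \<in> {1..t}" and "q \<noteq> 0"
    have "M * (of_int q / (M * (1 / a))) = of_int q * a" using assms(2) by simp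
    then show "{\<theta> i - \<zeta>s i / M - of_int q / (M * (1 / a)) .. \<theta> i + \<zeta>s i / M - of_int q / (M * (1 / a))}
        \<inter> {\<theta> j - \<zeta>s j / M .. \<theta> j + \<zeta>s j / M} = {}"
      using disjoint_shifted_Icc_iff[OF assms(2) assms(4)[OF ij(1)] assms(4)[OF ij(2)]]
        avoid[OF ij \<open>q \<noteq> 0\<close>]
      by simp
  qed
qed

end
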